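(* Let $m, s$ be positive integers with $n = \lfloor 2m/s \rfloor \ge 3$. Then $f(m,s) > 1/3$.
   Context: The muffin problem with $m$ muffins and $s$ students (positive integers) asks to cut each of $m$ muffins of size $1$ into finitely many pieces of positive size and to assign every piece to one of $s$ students so that each student receives pieces of total size $m/s$. $f(m,s)$ denotes the maximum, over all such divisions and assignments, of the size of the smallest piece. *)

theory Defs
  imports Complex_Main
begin

text \<open>A division/assignment for the muffin problem with m muffins and s students is
  represented as a finite list of pieces (i, j, x): a piece of muffin i (i < m),
  of size x > 0, given to student j (j < s).\<close>

definition muffin_procedure :: "nat \<Rightarrow> nat \<Rightarrow> (nat \<times> nat \<times> real) list \<Rightarrow> bool" where
  "muffin_procedure m s P \<longleftrightarrow>
     (\<forall>(i, j, x) \<in> set P. i < m \<and> j < s \<and> x > 0) \<and>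
     (\<forall>i < m. sum_list (map (\<lambda>(i', j, x). x) (filter (\<lambda>(i', j, x). i' = i) P)) = 1) \<and>
     (\<forall>j < s. sum_list (map (\<lambda>(i, j', x). x) (filter (\<lambda>(i, j', x). j' = j) P)) = real m / real s)"

definition smallest_piece :: "(nat \<times> nat \<times> real) list \<Rightarrow> real" where
  "smallest_piece P = Min ((\<lambda>(i, j, x). x) ` set P)"

definition muffin_f :: "nat \<Rightarrow> nat \<Rightarrow> real" where
  "muffin_f m s = Sup {smallest_piece P | P. muffin_procedure m s P}"

end

theory Submission
  imports Defs "HOL-Library.Multiset"
begin

(* Every muffin is cut into exactly two pieces, both of size in (1/3, 2/3).  Most muffins are
   laid out along a cycle of slots, each slot owned by a student: muffin k is split between the
   owners of slots k and k + 1 at the point q + S (k + 1), where S is the sequence of partial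
   sums of prescribed slot excesses w.  Slot k then receives exactly 1 + w k, and all pieces lie
   within (1/3, 2/3) as long as the partial sums stay in a window [-A, B] with A + B < 1/3.
   Such an ordering of the slots exists whenever the excesses lie in [-A, B] and sum to 0: add a
   negative excess while the partial sum is positive and a nonnegative one otherwise.

   With k = floor (2m/s) >= 3, every student receives k or k + 1 pieces.  A student with an
   even number t of pieces gets t/2 slots; students with an odd number are paired up and share
   halved muffins.  The resulting excesses fit into a window of width less than 1/3 except when
   k = 3 and m/s >= 5/3; there a different set of extra muffins, cut at (2 + m/s)/6, is used. *)

type_synonym cut = "nat \<times> nat \<times> real"

lemma sum_list_map_concat: "sum_list (map f (concat xss)) = (\<Sum>xs \<leftarrow> xss. sum_list (map f xs))"
  by (induction xss) auto

lemma sum_list_map_concat_replicate: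
  "sum_list (map f (concat (map (\<lambda>j. replicate (v j) (g j)) [0..<s])))
    = (\<Sum>j<s. real (v j) * (f (g j) :: real))"
  by (simp add: sum_list_map_concat o_def sum_list_replicate
      interv_sum_list_conv_sum_set_nat atLeast0LessThan)

lemma sum_list_map_mset_eq:
  fixes f :: "'a \<Rightarrow> 'b::comm_monoid_add"
  assumes "mset xs = mset ys"
  shows "sum_list (map f xs) = sum_list (map f ys)"
  using assms by (simp only: sum_mset_sum_list[symmetric] mset_map)

lemma sum_lessThan_rotate: "(\<Sum>k<n. g (Suc k mod n)) = (\<Sum>k<n. g k)"
proof (cases n)
  case (Suc n')
  have "(\<Sum>k<Suc n'. g (Suc k mod Suc n')) = (\<Sum>k<n'. g (Suc k mod Suc n')) + g 0"
    by simp
  also have "(\<Sum>k<n'. g (Suc k mod Suc n')) = (\<Sum>k<n'. g (Suc k))"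
    by (intro sum.cong) auto
  also have "\<dots> + g 0 = (\<Sum>k<Suc n'. g k)"
    by (subst sum.lessThan_Suc_shift) (simp add: add.commute)
  finally show ?thesis
    using Suc by simp
qed simp

lemma sum_if_add_eq:
  fixes a j n :: nat
  shows "(\<Sum>i<n. if a + i = j then x else 0) = (if a \<le> j \<and> j < a + n then x else (0::real))"
  by (induction n) auto

lemma sum_if_less_lessThan:
  "c \<le> s \<Longrightarrow> (\<Sum>j<s. if j < c then x else y) = c * x + (s - c) * (y::nat)"
proof (induction s)
  case (Suc s)
  then show ?case
    by (cases "c = Suc s") (auto simp: Suc_diff_le)
qed simp

lemma ex_perm_bounded_partial_sums:
  fixes w :: "'a \<Rightarrow> real"
  assumes "S + sum_list (map w xs) = 0" and "\<forall>x\<in>set xs. -A \<le> w x \<and> w x \<le> B"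
    and "-A \<le> S" and "S \<le> B"
  shows "\<exists>ys. mset ys = mset xs \<and>
    (\<forall>k\<le>length ys. -A \<le> S + sum_list (map w (take k ys)) \<and> S + sum_list (map w (take k ys)) \<le> B)"
  using assms
proof (induction "length xs" arbitrary: xs S rule: less_induct)
  case less
  show ?case
  proof (cases "xs = []")
    case True
    with less.prems show ?thesis by auto
  next
    case False
    have "\<exists>x\<in>set xs. -A \<le> S + w x \<and> S + w x \<le> B"
    proof (cases "S > 0")
      case True
      with less.prems(1) have "sum_list (map w xs) < 0" by linarith
      then obtain x where "x \<in> set xs" "w x < 0"
        using sum_list_nonneg[of "map w xs"] by force
      with True less.prems(2,4) show ?thesis by force
    next
      case False
      with less.prems(1) have "sum_list (map w xs) \<ge> 0" by linarith
      with \<open>xs \<noteq> []\<close> obtain x where "x \<in> set xs" "w x \<ge> 0"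
        using sum_list_strict_mono[of xs w "\<lambda>_. 0"] by force
      with False less.prems(2,3) show ?thesis by force
    qed
    then obtain x where x: "x \<in> set xs" "-A \<le> S + w x" "S + w x \<le> B"
      by blast
    have shorter: "length (remove1 x xs) < length xs"
      using x(1) length_pos_if_in_set[OF x(1)] by (simp add: length_remove1)
    have "sum_list (map w xs) = w x + sum_list (map w (remove1 x xs))"
      using x(1) by (rule sum_list_map_remove1)
    then obtain ys where ys: "mset ys = mset (remove1 x xs)"
      "\<forall>k\<le>length ys. -A \<le> (S + w x) + sum_list (map w (take k ys))
        \<and> (S + w x) + sum_list (map w (take k ys)) \<le> B"
      using less.hyps[OF shorter, of "S + w x"] less.prems x
      by (auto dest: notin_set_remove1)
    show ?thesis
    proof (intro exI conjI allI impI)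
      show "mset (x # ys) = mset xs"
        using ys(1) x(1) by simp
    next
      fix k assume "k \<le> length (x # ys)"
      with ys(2) less.prems(3,4) show "-A \<le> S + sum_list (map w (take k (x # ys)))"
        and "S + sum_list (map w (take k (x # ys))) \<le> B"
        by (cases k; simp add: add.assoc)+
    qed
  qed
qed

(* A cut (a, b, p) is a muffin split into a piece of size p for student a and a piece of
   size 1 - p for student b. *)

definition cut_share :: "cut list \<Rightarrow> nat \<Rightarrow> real" where
  "cut_share cuts j = (\<Sum>(a, b, p) \<leftarrow> cuts. (if a = j then p else 0) + (if b = j then 1 - p else 0))"

definition cuts_within :: "real \<Rightarrow> nat \<Rightarrow> cut list \<Rightarrow> bool" where
  "cuts_within \<alpha> s cuts \<longleftrightarrow> (\<forall>(a, b, p) \<in> set cuts. a < s \<and> b < s \<and> \<alpha> < p \<and> p < 1 - \<alpha>)"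

definition two_piece_division :: "real \<Rightarrow> nat \<Rightarrow> nat \<Rightarrow> cut list \<Rightarrow> bool" where
  "two_piece_division \<alpha> m s cuts \<longleftrightarrow>
     length cuts = m \<and> cuts_within \<alpha> s cuts \<and> (\<forall>j<s. cut_share cuts j = real m / real s)"

definition cut_pieces :: "cut list \<Rightarrow> (nat \<times> nat \<times> real) list" where
  "cut_pieces cuts =
     concat (map (\<lambda>i. case cuts ! i of (a, b, p) \<Rightarrow> [(i, a, p), (i, b, 1 - p)]) [0..<length cuts])"

lemma cut_share_append: "cut_share (xs @ ys) j = cut_share xs j + cut_share ys j"
  by (simp add: cut_share_def)

lemma cuts_within_append:
  "cuts_within \<alpha> s (xs @ ys) \<longleftrightarrow> cuts_within \<alpha> s xs \<and> cuts_within \<alpha> s ys"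
  unfolding cuts_within_def by (simp only: set_append ball_Un)

lemma sum_cut_share:
  assumes "cuts_within \<alpha> s cuts"
  shows "(\<Sum>j<s. cut_share cuts j) = real (length cuts)"
  using assms
proof (induction cuts)
  case (Cons c cuts)
  obtain a b p where c: "c = (a, b, p)"
    by (cases c)
  with Cons.prems have "a < s" "b < s" and "cuts_within \<alpha> s cuts"
    by (auto simp: cuts_within_def)
  then show ?case
    using Cons.IH by (simp add: c cut_share_def sum.distrib)
qed (simp add: cut_share_def)

lemma cut_piecesE:
  assumes "(i, j, x) \<in> set (cut_pieces cuts)"
  obtains a b p where "i < length cuts" and "cuts ! i = (a, b, p)"
    and "j = a \<and> x = p \<or> j = b \<and> x = 1 - p"
proof -
  obtain k where k: "k \<in> {0..<length cuts}"
    and mem: "(i, j, x) \<in> set (case cuts ! k of (a, b, p) \<Rightarrow> [(k, a, p), (k, b, 1 - p)])"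
    using assms unfolding cut_pieces_def set_concat set_map image_image set_upt by (rule UN_E)
  obtain a b p where "cuts ! k = (a, b, p)"
    by (cases "cuts ! k")
  with k mem that show ?thesis
    by auto
qed

lemma cut_pieces_within:
  assumes "cuts_within \<alpha> s cuts" and "(i, j, x) \<in> set (cut_pieces cuts)"
  shows "i < length cuts \<and> j < s \<and> \<alpha> < x"
proof -
  obtain a b p where "i < length cuts" "cuts ! i = (a, b, p)" "j = a \<and> x = p \<or> j = b \<and> x = 1 - p"
    using assms(2) by (rule cut_piecesE)
  with assms(1) nth_mem[of i cuts] show ?thesis
    by (auto simp: cuts_within_def)
qed

lemma muffin_procedure_cut_pieces:
  assumes "two_piece_division \<alpha> m s cuts" and "0 \<le> \<alpha>"
  shows "muffin_procedure m s (cut_pieces cuts)"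
proof -
  have len: "length cuts = m" and within: "cuts_within \<alpha> s cuts"
    and share: "\<forall>j<s. cut_share cuts j = real m / real s"
    using assms(1) by (auto simp: two_piece_division_def)
  have "\<forall>(i, j, x) \<in> set (cut_pieces cuts). i < m \<and> j < s \<and> x > 0"
    using cut_pieces_within[OF within] len assms(2) by fastforce
  moreover have "sum_list (map (\<lambda>(i', j, x). x) (filter (\<lambda>(i', j, x). i' = i) (cut_pieces cuts))) = 1"
    if "i < m" for i
  proof -
    have muffin_k: "(\<Sum>(i', j, x) \<leftarrow> filter (\<lambda>(i', j, x). i' = i)
        (case cuts ! k of (a, b, p) \<Rightarrow> [(k, a, p), (k, b, 1 - p)]). x) = (if k = i then 1 else 0)"
      for k
      by (cases "cuts ! k") auto
    have "sum_list (map (\<lambda>(i', j, x). x) (filter (\<lambda>(i', j, x). i' = i) (cut_pieces cuts)))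
        = (\<Sum>k<m. if k = i then 1 else 0)"
      unfolding cut_pieces_def filter_concat sum_list_map_concat map_map o_def len muffin_k
      by (simp add: interv_sum_list_conv_sum_set_nat atLeast0LessThan)
    also have "\<dots> = 1"
      using that by simp
    finally show ?thesis .
  qed
  moreover have "sum_list (map (\<lambda>(i, j', x). x) (filter (\<lambda>(i, j', x). j' = j) (cut_pieces cuts)))
      = cut_share cuts j" for j
  proof -
    let ?share_of = "\<lambda>(a, b, p). (if a = j then p else 0) + (if b = j then 1 - p else 0)"
    have student_k: "(\<Sum>(i, j', x) \<leftarrow> filter (\<lambda>(i, j', x). j' = j)
        (case cuts ! k of (a, b, p) \<Rightarrow> [(k, a, p), (k, b, 1 - p)]). x) = ?share_of (cuts ! k)"
      for k
      by (cases "cuts ! k") auto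
    show ?thesis
      unfolding cut_pieces_def filter_concat sum_list_map_concat map_map o_def student_k
        cut_share_def sum_list_sum_nth[of "map ?share_of cuts"]
      by (simp add: interv_sum_list_conv_sum_set_nat)
  qed
  ultimately show ?thesis
    using share by (simp add: muffin_procedure_def)
qed

lemma muffin_procedure_nonempty:
  assumes "0 < m" and "muffin_procedure m s P"
  shows "P \<noteq> []"
proof
  assume "P = []"
  with assms show False
    unfolding muffin_procedure_def by force
qed

lemma smallest_piece_le_one:
  assumes "0 < m" and "muffin_procedure m s P"
  shows "smallest_piece P \<le> 1"
proof -
  let ?sizes = "map (\<lambda>(i, j, x). x) (filter (\<lambda>(i, j, x). i = 0) P)"
  have sum1: "sum_list ?sizes = 1"
    using assms unfolding muffin_procedure_def by blast
  then obtain x where x: "x \<in> set ?sizes"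
    by (cases ?sizes) auto
  have "\<forall>y\<in>set ?sizes. 0 \<le> y"
    using assms(2) unfolding muffin_procedure_def by fastforce
  then have "x \<le> 1"
    using member_le_sum_list[OF x] sum1 by metis
  moreover have "smallest_piece P \<le> x"
    using x unfolding smallest_piece_def by (intro Min_le) force+
  ultimately show ?thesis
    by simp
qed

lemma smallest_piece_le_muffin_f:
  assumes "0 < m" and "muffin_procedure m s P"
  shows "smallest_piece P \<le> muffin_f m s"
  unfolding muffin_f_def
proof (rule cSup_upper)
  show "smallest_piece P \<in> {smallest_piece P |P. muffin_procedure m s P}"
    using assms(2) by blast
  show "bdd_above {smallest_piece P |P. muffin_procedure m s P}"
    using smallest_piece_le_one[OF assms(1)] by (intro bdd_aboveI[of _ 1]) blast
qed

lemma two_piece_division_imp_muffin_f_gt: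
  assumes "two_piece_division \<alpha> m s cuts" and "0 < m" and "0 \<le> \<alpha>"
  shows "\<alpha> < muffin_f m s"
proof -
  let ?P = "cut_pieces cuts"
  have proc: "muffin_procedure m s ?P"
    using assms(1,3) by (rule muffin_procedure_cut_pieces)
  have "\<alpha> < smallest_piece ?P"
    using muffin_procedure_nonempty[OF assms(2) proc] cut_pieces_within assms(1)
    by (auto simp: smallest_piece_def two_piece_division_def)
  also have "\<dots> \<le> muffin_f m s"
    using assms(2) proc by (rule smallest_piece_le_muffin_f)
  finally show ?thesis .
qed

(* ys lists the slots of the cycle as pairs (owner, excess). *)

definition cycle_cuts :: "real \<Rightarrow> (nat \<times> real) list \<Rightarrow> cut list" where
  "cycle_cuts q ys = map (\<lambda>k. (fst (ys ! k), fst (ys ! (Suc k mod length ys)),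
     q + sum_list (map snd (take (Suc k) ys)))) [0..<length ys]"

lemma cut_share_cycle_cuts:
  assumes "sum_list (map snd ys) = 0"
  shows "cut_share (cycle_cuts q ys) j = (\<Sum>(i, w) \<leftarrow> ys. if i = j then 1 + w else 0)"
proof -
  define n where "n = length ys"
  define P where "P k = sum_list (map snd (take k ys))" for k
  define mine where "mine k \<longleftrightarrow> fst (ys ! k) = j" for k
  define g where "g k = (if mine k then 1 - (q + P k) else 0)" for k
  have wrap: "P (Suc k) = P (Suc k mod n)" if "k < n" for k
    using that assms by (cases "Suc k = n") (auto simp: P_def n_def)
  have "cut_share (cycle_cuts q ys) j = (\<Sum>k<n. (if mine k then q + P (Suc k) else 0)
      + (if mine (Suc k mod n) then 1 - (q + P (Suc k)) else 0))"
    unfolding cut_share_def cycle_cuts_def P_def mine_def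
    by (simp add: interv_sum_list_conv_sum_set_nat atLeast0LessThan flip: n_def)
  also have "\<dots> = (\<Sum>k<n. (if mine k then q + P (Suc k) else 0) + g (Suc k mod n))"
    by (intro sum.cong) (simp_all add: g_def wrap)
  also have "\<dots> = (\<Sum>k<n. (if mine k then q + P (Suc k) else 0) + g k)"
    by (simp add: sum.distrib sum_lessThan_rotate)
  also have "\<dots> = (\<Sum>k<n. if mine k then 1 + snd (ys ! k) else 0)"
    by (intro sum.cong) (auto simp: g_def P_def n_def take_Suc_conv_app_nth)
  also have "\<dots> = (\<Sum>(i, w) \<leftarrow> ys. if i = j then 1 + w else 0)"
    by (simp add: sum_list_sum_nth atLeast0LessThan mine_def n_def split_beta)
  finally show ?thesis .
qed

lemma ex_cycle_cuts_within:
  assumes sum0: "sum_list (map snd xs) = 0"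
    and steps: "\<forall>(i, w) \<in> set xs. i < s \<and> -A \<le> w \<and> w \<le> B"
    and "0 \<le> A" "0 \<le> B" and width: "A + B < 1 - 2 * \<alpha>"
  shows "\<exists>cuts. length cuts = length xs \<and> cuts_within \<alpha> s cuts \<and>
    (\<forall>j. cut_share cuts j = (\<Sum>(i, w) \<leftarrow> xs. if i = j then 1 + w else 0))"
proof -
  have "\<forall>x\<in>set xs. -A \<le> snd x \<and> snd x \<le> B"
    using steps by auto
  then obtain ys where perm: "mset ys = mset xs"
    and window: "\<forall>k\<le>length ys.
      -A \<le> sum_list (map snd (take k ys)) \<and> sum_list (map snd (take k ys)) \<le> B"
    using ex_perm_bounded_partial_sums[of 0 snd xs A B] sum0 assms(3,4) by auto
  have set_ys: "set ys = set xs" and len_ys: "length ys = length xs"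
    using perm by (auto dest: mset_eq_setD mset_eq_length)
  have label: "fst y < s" if "y \<in> set ys" for y
    using steps that set_ys by auto
  define q where "q = (1 + A - B) / 2"
  have "cuts_within \<alpha> s (cycle_cuts q ys)"
  proof -
    have "fst (ys ! k) < s \<and> fst (ys ! (Suc k mod length ys)) < s \<and>
      \<alpha> < q + sum_list (map snd (take (Suc k) ys)) \<and> q + sum_list (map snd (take (Suc k) ys)) < 1 - \<alpha>"
      if k: "k < length ys" for k
    proof (intro conjI)
      have "Suc k mod length ys < length ys"
        using k by (intro mod_less_divisor) linarith
      then show "fst (ys ! k) < s" "fst (ys ! (Suc k mod length ys)) < s"
        using k label nth_mem by blast+
      have "-A \<le> sum_list (map snd (take (Suc k) ys))" "sum_list (map snd (take (Suc k) ys)) \<le> B"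
        using window k by auto
      then show "\<alpha> < q + sum_list (map snd (take (Suc k) ys))"
        using width unfolding q_def by (simp add: field_simps)
      show "q + sum_list (map snd (take (Suc k) ys)) < 1 - \<alpha>"
        using \<open>sum_list (map snd (take (Suc k) ys)) \<le> B\<close> width unfolding q_def
        by (simp add: field_simps)
    qed
    then show ?thesis
      unfolding cuts_within_def cycle_cuts_def by auto
  qed
  moreover have "cut_share (cycle_cuts q ys) j = (\<Sum>(i, w) \<leftarrow> xs. if i = j then 1 + w else 0)" for j
  proof -
    have "sum_list (map snd ys) = 0"
      using sum0 sum_list_map_mset_eq[OF perm, of snd] by simp
    then show ?thesis
      using cut_share_cycle_cuts sum_list_map_mset_eq[OF perm] by simp
  qed
  ultimately show ?thesis
    using len_ys by (intro exI[of _ "cycle_cuts q ys"]) (simp add: cycle_cuts_def)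
qed

lemma ex_two_piece_division:
  assumes "0 < s"
    and extra: "cuts_within \<alpha> s es"
    and count: "(\<Sum>j<s. v j) + length es = m"
    and "0 \<le> A" "0 \<le> B" "A + B < 1 - 2 * \<alpha>"
    and slots: "\<forall>j<s. real (v j) * (1 - A) \<le> real m / real s - cut_share es j
      \<and> real m / real s - cut_share es j \<le> real (v j) * (1 + B)"
  shows "\<exists>cuts. two_piece_division \<alpha> m s cuts"
proof -
  define d where "d = real m / real s"
  (* for v j = 0 the junk value of w j is never used, and slots forces d = cut_share es j *)
  define w where "w j = (d - cut_share es j) / real (v j) - 1" for j
  define xs where "xs = concat (map (\<lambda>j. replicate (v j) (j, w j)) [0..<s])"
  have slot_total: "real (v j) * (1 + w j) = d - cut_share es j" if "j < s" for j
    using slots that by (cases "v j = 0") (auto simp: w_def d_def field_simps)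
  have "sum_list (map snd xs) = (\<Sum>j<s. d - cut_share es j - real (v j))"
    unfolding xs_def sum_list_map_concat_replicate
    by (intro sum.cong) (auto simp: slot_total[symmetric] algebra_simps)
  also have "\<dots> = real s * d - real (length es) - real (\<Sum>j<s. v j)"
    using sum_cut_share[OF extra] by (simp add: sum_subtractf)
  also have "\<dots> = 0"
    using count \<open>0 < s\<close> by (auto simp: d_def)
  finally have sum0: "sum_list (map snd xs) = 0" .
  have "\<forall>(i, x) \<in> set xs. i < s \<and> -A \<le> x \<and> x \<le> B"
  proof (clarsimp simp: xs_def)
    fix j assume j: "j < s" and "0 < v j"
    then show "-A \<le> w j \<and> w j \<le> B"
      using slots by (auto simp: w_def d_def field_simps)
  qed
  then obtain cycle where len: "length cycle = length xs" and within: "cuts_within \<alpha> s cycle"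
    and share: "\<forall>j. cut_share cycle j = (\<Sum>(i, x) \<leftarrow> xs. if i = j then 1 + x else 0)"
    using ex_cycle_cuts_within[OF sum0] assms(4-6) by blast
  have "cut_share (cycle @ es) j = d" if "j < s" for j
  proof -
    have "(\<Sum>(i, x) \<leftarrow> xs. if i = j then 1 + x else 0) = real (v j) * (1 + w j)"
      unfolding xs_def sum_list_map_concat_replicate using that
      by (simp add: if_distrib[of "\<lambda>x. real (v _) * x"] cong: if_cong)
    then show ?thesis
      using share slot_total[OF that] by (simp add: cut_share_append)
  qed
  moreover have "length (cycle @ es) = m"
    using len count
    by (simp add: xs_def length_concat o_def interv_sum_list_conv_sum_set_nat atLeast0LessThan)
  ultimately have "two_piece_division \<alpha> m s (cycle @ es)"
    using within extra by (simp add: two_piece_division_def cuts_within_append d_def)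
  then show ?thesis ..
qed

definition parallel_cuts :: "nat \<Rightarrow> nat \<Rightarrow> nat \<Rightarrow> real \<Rightarrow> cut list" where
  "parallel_cuts a b n p = map (\<lambda>i. (a + i, b + i, p)) [0..<n]"

lemma cut_share_parallel_cuts:
  "cut_share (parallel_cuts a b n p) j
    = (if a \<le> j \<and> j < a + n then p else 0) + (if b \<le> j \<and> j < b + n then 1 - p else 0)"
  by (simp add: cut_share_def parallel_cuts_def interv_sum_list_conv_sum_set_nat atLeast0LessThan
      sum.distrib sum_if_add_eq)

lemma cuts_within_parallel_cuts:
  "a + n \<le> s \<Longrightarrow> b + n \<le> s \<Longrightarrow> \<alpha> < p \<Longrightarrow> p < 1 - \<alpha> \<Longrightarrow>
    cuts_within \<alpha> s (parallel_cuts a b n p)"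
  by (auto simp: cuts_within_def parallel_cuts_def)

lemma ex_two_piece_division_five_thirds:
  assumes "0 < s" and "5 * s \<le> 3 * m" and "m < 2 * s"
  shows "\<exists>cuts. two_piece_division (1/3) m s cuts"
proof -
  define n1 where "n1 = 2 * s - m"
  define n2 where "n2 = 3 * m - 5 * s"
  have s_eq: "s = 3 * n1 + n2" and m_eq: "m = 5 * n1 + 2 * n2"
    using assms unfolding n1_def n2_def by linarith+
  define d where "d = real m / real s"
  have d_bounds: "5/3 \<le> d" "d < 2"
    using assms by (auto simp: d_def field_simps)
  define p where "p = (2 + d) / 6"
  define A B where "A = 1 - d / 2" and "B = (5 * d - 8) / 6"
  (* The first 2 n1 students get one slot and one piece p, the next n1 students one slot and
     two pieces 1 - p, the last n2 students two slots; p makes the excess of the first group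
     exactly B. *)
  define es where "es = parallel_cuts 0 (2 * n1) n1 p @ parallel_cuts n1 (2 * n1) n1 p"
  define v :: "nat \<Rightarrow> nat" where "v j = (if j < 3 * n1 then 1 else 2)" for j
  have share_es: "cut_share es j = (if j < 2 * n1 then p else 0)
      + (if 2 * n1 \<le> j \<and> j < 3 * n1 then 2 * (1 - p) else 0)" for j
    by (auto simp: es_def cut_share_append cut_share_parallel_cuts)
  have "cuts_within (1/3) s es"
    using d_bounds s_eq
    by (auto simp: es_def cuts_within_append p_def intro!: cuts_within_parallel_cuts)
  moreover have "(\<Sum>j<s. v j) + length es = m"
    using s_eq m_eq by (simp add: v_def sum_if_less_lessThan es_def parallel_cuts_def)
  moreover have "0 \<le> A" "0 \<le> B" "A + B < 1 - 2 * (1/3)"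
    using d_bounds by (auto simp: A_def B_def field_simps)
  moreover have "\<forall>j<s. real (v j) * (1 - A) \<le> d - cut_share es j
      \<and> d - cut_share es j \<le> real (v j) * (1 + B)"
    using d_bounds by (auto simp: A_def B_def share_es v_def p_def field_simps)
  ultimately show ?thesis
    unfolding d_def by (rule ex_two_piece_division[OF \<open>0 < s\<close>])
qed

lemma ex_two_piece_division_with_halves:
  assumes "0 < s" and "c \<le> s" and "even c"
    and count: "c * x + (s - c) * y + c div 2 = m"
    and "0 \<le> A" "0 \<le> B" "A + B < 1/3"
    and x_slot: "real x * (1 - A) \<le> real m / real s - 1/2" "real m / real s - 1/2 \<le> real x * (1 + B)"
    and y_slot: "real y * (1 - A) \<le> real m / real s" "real m / real s \<le> real y * (1 + B)"
  shows "\<exists>cuts. two_piece_division (1/3) m s cuts"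
proof -
  obtain h where c_eq: "c = 2 * h"
    using \<open>even c\<close> ..
  define es where "es = parallel_cuts 0 h h (1/2)"
  define v :: "nat \<Rightarrow> nat" where "v j = (if j < c then x else y)" for j
  have share_es: "cut_share es j = (if j < c then 1/2 else 0)" for j
    by (auto simp: es_def cut_share_parallel_cuts c_eq)
  have "cuts_within (1/3) s es"
    using \<open>c \<le> s\<close> c_eq by (auto simp: es_def intro!: cuts_within_parallel_cuts)
  moreover have "(\<Sum>j<s. v j) + length es = m"
    using count sum_if_less_lessThan[OF \<open>c \<le> s\<close>, of x y] c_eq
    by (simp add: v_def es_def parallel_cuts_def)
  moreover have "A + B < 1 - 2 * (1/3)"
    using \<open>A + B < 1/3\<close> by simp
  moreover have "\<forall>j<s. real (v j) * (1 - A) \<le> real m / real s - cut_share es j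
      \<and> real m / real s - cut_share es j \<le> real (v j) * (1 + B)"
    using x_slot y_slot by (simp add: v_def share_es)
  ultimately show ?thesis
    using \<open>0 < s\<close> \<open>0 \<le> A\<close> \<open>0 \<le> B\<close> by (intro ex_two_piece_division) auto
qed

lemma paired_halves_count:
  fixes m s :: nat
  assumes "0 < s"
  defines "k \<equiv> 2 * m div s"
  obtains c where "c \<le> s" and "even c" and "c * (k div 2) + (s - c) * ((k + 1) div 2) + c div 2 = m"
proof -
  (* a students need k pieces and b students k + 1; c of them need an odd number *)
  have k_lower: "k * s \<le> 2 * m"
    by (simp add: k_def)
  have k_upper: "2 * m < (k + 1) * s"
    using dividend_less_div_times[OF \<open>0 < s\<close>, of "2 * m"] by (simp add: k_def)
  define a b where "a = (k + 1) * s - 2 * m" and "b = 2 * m - k * s"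
  have ab: "a + b = s"
    using k_lower k_upper by (simp add: a_def b_def algebra_simps)
  have kab: "k * a + (k + 1) * b = 2 * m"
  proof -
    have "k * a + (k + 1) * b = k * (a + b) + b"
      by (simp add: algebra_simps)
    also have "\<dots> = 2 * m"
      using ab k_lower by (simp add: b_def)
    finally show ?thesis .
  qed
  define c where "c = (if odd k then a else b)"
  have "even (k * a + (k + 1) * b)"
    using kab by simp
  then have "even c"
    by (auto simp: c_def)
  have "s - c = (if odd k then b else a)"
    using ab by (auto simp: c_def)
  then have "2 * (c * (k div 2) + (s - c) * ((k + 1) div 2)) + c = 2 * m"
    using kab by (cases "odd k") (auto simp: c_def elim!: oddE evenE simp: algebra_simps)
  with \<open>even c\<close> have "c * (k div 2) + (s - c) * ((k + 1) div 2) + c div 2 = m"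
    by (auto elim!: evenE)
  moreover have "c \<le> s"
    using ab by (simp add: c_def)
  ultimately show ?thesis
    using \<open>even c\<close> that by blast
qed

lemma halves_window_lt_third:
  fixes k :: nat and d :: real
  assumes "3 \<le> k" and "real k / 2 \<le> d" and "d < (real k + 1) / 2" and "k = 3 \<Longrightarrow> d < 5/3"
  shows "((real k + 1) / 2 - d) / real ((k + 1) div 2) + (d - real k / 2) / real (k div 2) < 1/3"
    (is "?A + ?B < _")
proof (cases "k = 3")
  case True
  with assms(4) show ?thesis
    by (simp add: field_simps)
next
  case False
  with assms(1) have two_le: "2 \<le> real (k div 2)" "2 \<le> real ((k + 1) div 2)"
    by simp_all
  have "?A \<le> ((real k + 1) / 2 - d) / 2"
    by (rule divide_left_mono) (use two_le assms(3) in auto)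
  moreover have "?B \<le> (d - real k / 2) / 2"
    by (rule divide_left_mono) (use two_le assms(2) in auto)
  ultimately have "?A + ?B \<le> ((real k + 1) / 2 - d) / 2 + (d - real k / 2) / 2"
    by linarith
  also have "\<dots> = 1/4"
    by (simp add: field_simps)
  finally show ?thesis
    by linarith
qed

lemma halves_slot_bounds:
  fixes k :: nat and d :: real
  assumes "3 \<le> k" and "real k / 2 \<le> d" and "d < (real k + 1) / 2" and "k = 3 \<Longrightarrow> d < 5/3"
  obtains A B where "0 \<le> A" and "0 \<le> B" and "A + B < 1/3"
    and "real (k div 2) * (1 - A) \<le> d - 1/2" and "d - 1/2 \<le> real (k div 2) * (1 + B)"
    and "real ((k + 1) div 2) * (1 - A) \<le> d" and "d \<le> real ((k + 1) div 2) * (1 + B)"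
proof -
  define A B where "A = ((real k + 1) / 2 - d) / real ((k + 1) div 2)"
    and "B = (d - real k / 2) / real (k div 2)"
  have halves_pos: "0 < k div 2" "0 < (k + 1) div 2"
    using assms(1) by simp_all
  have "0 \<le> A" "0 \<le> B"
    using assms(2,3) by (simp_all add: A_def B_def)
  have slot: "real n * (1 - A) \<le> d - e \<and> d - e \<le> real n * (1 + B)"
    if "n = k div 2 \<and> real n + e = real k / 2 \<or> n = (k + 1) div 2 \<and> real n + e = (real k + 1) / 2"
    for n e
  proof -
    have "real n * (1 - A) \<le> real n * (1 + B)"
      using \<open>0 \<le> A\<close> \<open>0 \<le> B\<close> by (intro mult_left_mono) auto
    moreover from that have "d - e = real n * (1 + B) \<or> d - e = real n * (1 - A)"
    proof
      assume n: "n = k div 2 \<and> real n + e = real k / 2"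
      then have "real n * B = d - real k / 2"
        using halves_pos by (simp add: B_def)
      with n show ?thesis
        by (intro disjI1) (simp add: algebra_simps)
    next
      assume n: "n = (k + 1) div 2 \<and> real n + e = (real k + 1) / 2"
      then have "real n * A = (real k + 1) / 2 - d"
        using halves_pos by (simp add: A_def)
      with n show ?thesis
        by (intro disjI2) (simp add: algebra_simps)
    qed
    ultimately show ?thesis by auto
  qed
  have "real (k div 2) * (1 - A) \<le> d - 1/2 \<and> d - 1/2 \<le> real (k div 2) * (1 + B)"
    by (rule slot) (cases "odd k"; auto elim!: oddE evenE)
  moreover have "real ((k + 1) div 2) * (1 - A) \<le> d - 0 \<and> d - 0 \<le> real ((k + 1) div 2) * (1 + B)"
    by (rule slot) (cases "odd k"; auto elim!: oddE evenE)
  moreover have "A + B < 1/3"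
    unfolding A_def B_def using assms by (rule halves_window_lt_third)
  ultimately show ?thesis
    using \<open>0 \<le> A\<close> \<open>0 \<le> B\<close> that by simp
qed

lemma ex_two_piece_division_floor_ge_3:
  assumes "0 < s" and "3 \<le> 2 * m div s" and below_two: "m < 2 * s \<Longrightarrow> 3 * m < 5 * s"
  shows "\<exists>cuts. two_piece_division (1/3) m s cuts"
proof -
  define k where "k = 2 * m div s"
  define d where "d = real m / real s"
  have "k * s \<le> 2 * m" and k_upper: "2 * m < (k + 1) * s"
    using dividend_less_div_times[OF \<open>0 < s\<close>, of "2 * m"] by (simp_all add: k_def)
  then have "real (k * s) \<le> real (2 * m)" "real (2 * m) < real ((k + 1) * s)"
    by (simp_all only: of_nat_le_iff of_nat_less_iff)
  then have d_bounds: "real k / 2 \<le> d" "d < (real k + 1) / 2"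
    using \<open>0 < s\<close> by (simp_all add: d_def field_simps)
  have "d < 5/3" if "k = 3"
  proof -
    have "3 * m < 5 * s"
      using k_upper that by (intro below_two) simp
    then show ?thesis
      using \<open>0 < s\<close> by (simp add: d_def field_simps)
  qed
  then obtain A B where "0 \<le> A" "0 \<le> B" "A + B < 1/3"
    and "real (k div 2) * (1 - A) \<le> d - 1/2" "d - 1/2 \<le> real (k div 2) * (1 + B)"
    and "real ((k + 1) div 2) * (1 - A) \<le> d" "d \<le> real ((k + 1) div 2) * (1 + B)"
    using halves_slot_bounds[of k d] d_bounds \<open>3 \<le> 2 * m div s\<close> by (auto simp: k_def)
  moreover obtain c where "c \<le> s" "even c" "c * (k div 2) + (s - c) * ((k + 1) div 2) + c div 2 = m"
    using paired_halves_count[OF \<open>0 < s\<close>] unfolding k_def .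
  ultimately show ?thesis
    using ex_two_piece_division_with_halves[OF \<open>0 < s\<close>] unfolding d_def by blast
qed

theorem theorem12:
  fixes m s :: nat
  assumes "m > 0" and "s > 0"
    and "\<lfloor>2 * real m / real s\<rfloor> \<ge> 3"
  shows "muffin_f m s > 1 / 3"
proof -
  have "\<lfloor>real (2 * m) / real s\<rfloor> \<ge> 3"
    using assms(3) by simp
  then have k3: "3 \<le> 2 * m div s"
    by (simp only: floor_divide_of_nat_eq)
  have "\<exists>cuts. two_piece_division (1/3) m s cuts"
  proof (cases "5 * s \<le> 3 * m \<and> m < 2 * s")
    case True
    then show ?thesis
      using ex_two_piece_division_five_thirds[OF \<open>s > 0\<close>] by simp
  next
    case False
    then have "m < 2 * s \<Longrightarrow> 3 * m < 5 * s"
      by linarith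
    then show ?thesis
      by (rule ex_two_piece_division_floor_ge_3[OF \<open>s > 0\<close> k3])
  qed
  then obtain cuts where "two_piece_division (1/3) m s cuts" ..
  then show ?thesis
    using \<open>m > 0\<close> by (rule two_piece_division_imp_muffin_f_gt) simp
qed

end
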